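(* Suppose the relationship network on $V$ is fixed and known to the designer. For a distinguished agent $k\in V$ define the mechanism $g^{3,k}$ by, for $i\in V\setminus\{k\}$, $$g^{3,k}_i(\mathbf m)=\begin{cases}\dfrac{1}{|\mathrm{posF}(\mathbf m_{F_i\cap F_k})\setminus\{k\}|}, & \text{if } i\in \mathrm{posF}(\mathbf m_{F_k}),\\[2mm] 0,&\text{otherwise,}\end{cases}\qquad g^{3,k}_k(\mathbf m)=1-\sum_{i\in V\setminus\{k\}}g^{3,k}_i(\mathbf m).$$ Then for every $k\in V$, $g^{3,k}$ is valid and DSIC. Moreover, if the Intersection Condition F(k) holds, i.e. $F_i\cap F_j\cap F_k\neq\varnothing$ for all $i,j\in V\setminus\{k\}$ (including $i=j$), then $g^{3,k}$ is efficient.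
   Context: Let $V=\{1,\dots,n\}$ be a finite set of agents. A relationship network on $V$ assigns to every unordered pair of distinct agents exactly one of three symmetric relations: friends, enemies, or impartial. For $i\in V$, $F_i,E_i,I_i$ denote the sets of friends, enemies and impartials of $i$; they partition $V\setminus\{i\}$, and $j\in F_i\iff i\in F_j$ (similarly for $E$ and $I$). A set $N\subseteq V$ is the set of needy agents. Preferences: fix weights $w_f,w_e>0$. For $p,p'\in[0,1]^V$, $p\succ_i p'$ iff either $p_i>p'_i$, or $p_i=p'_i$ and $w_f\sum_{j\in F_i}(p_j-p'_j)-w_e\sum_{j\in E_i}(p_j-p'_j)>0$; $p\succsim_i p'$ means not $p'\succ_i p$. Known-network setting: each agent $i$ sends a message $m_i\subseteq V$ (the set of agents $i$ reports as needy; $j\in m_i$ is a positive vote of $i$ on $j$). A message profile is $\mathbf m=(m_i)_{i\in V}$; for $X\subseteq V$, $\mathbf m_X=(m_j)_{j\in X}$. A mechanism is a function $g:(2^V)^V\to[0,1]^V$; it is valid if $\sum_{i\in V}g_i(\mathbf m)\le 1$ for all $\mathbf m$; it is DSIC if for all $i\in V$, all profiles $\mathbf m$ and all $m'_i\subseteq V$, $g(\mathbf m)\succsim_i g(m'_i,\mathbf m_{-i})$; it is efficient if for every nonempty $N\subseteq V$, at the truthful profile $\mathbf m$ with $m_j=N$ for all $j$, $\sum_{i\in N}g_i(\mathbf m)=1$. For $X\subseteq V$, $\mathrm{posF}(\mathbf m_X)$ is the set of agents $j\in V$ such that $j\in m_l$ for every $l\in X\cap F_j$ (i.e. $j$ receives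 positive votes from all its friends in $X$). *)

theory Defs
  imports Complex_Main
begin

(* Agents: the elements of a finite type 'a (V = UNIV). *)

datatype relkind = Friends | Enemies | Impartial

(* A relationship network: R i j gives the relation between distinct i, j; symmetric.
   The value on the diagonal is irrelevant. *)
definition network :: "('a \<Rightarrow> 'a \<Rightarrow> relkind) \<Rightarrow> bool" where
  "network R \<longleftrightarrow> (\<forall>i j. R i j = R j i)"

definition Fr :: "('a \<Rightarrow> 'a \<Rightarrow> relkind) \<Rightarrow> 'a \<Rightarrow> 'a set" where
  "Fr R i = {j. j \<noteq> i \<and> R i j = Friends}"

definition En :: "('a \<Rightarrow> 'a \<Rightarrow> relkind) \<Rightarrow> 'a \<Rightarrow> 'a set" where
  "En R i = {j. j \<noteq> i \<and> R i j = Enemies}"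

definition posF :: "('a \<Rightarrow> 'a \<Rightarrow> relkind) \<Rightarrow> 'a set \<Rightarrow> ('a \<Rightarrow> 'a set) \<Rightarrow> 'a set" where
  "posF R X m = {j. \<forall>l \<in> X \<inter> Fr R j. j \<in> m l}"

definition strict_pref :: "real \<Rightarrow> real \<Rightarrow> ('a \<Rightarrow> 'a \<Rightarrow> relkind) \<Rightarrow> 'a
     \<Rightarrow> ('a \<Rightarrow> real) \<Rightarrow> ('a \<Rightarrow> real) \<Rightarrow> bool" where
  "strict_pref w_f w_e R i p p' \<longleftrightarrow>
     p i > p' i \<or>
     (p i = p' i \<and> w_f * (\<Sum>j\<in>Fr R i. p j - p' j) - w_e * (\<Sum>j\<in>En R i. p j - p' j) > 0)"

definition weak_pref :: "real \<Rightarrow> real \<Rightarrow> ('a \<Rightarrow> 'a \<Rightarrow> relkind) \<Rightarrow> 'a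
     \<Rightarrow> ('a \<Rightarrow> real) \<Rightarrow> ('a \<Rightarrow> real) \<Rightarrow> bool" where
  "weak_pref w_f w_e R i p p' \<longleftrightarrow> \<not> strict_pref w_f w_e R i p' p"

definition is_mechanism :: "(('a \<Rightarrow> 'a set) \<Rightarrow> 'a \<Rightarrow> real) \<Rightarrow> bool" where
  "is_mechanism g \<longleftrightarrow> (\<forall>m i. 0 \<le> g m i \<and> g m i \<le> 1)"

definition valid :: "(('a::finite \<Rightarrow> 'a set) \<Rightarrow> 'a \<Rightarrow> real) \<Rightarrow> bool" where
  "valid g \<longleftrightarrow> (\<forall>m. (\<Sum>i\<in>UNIV. g m i) \<le> 1)"

definition DSIC :: "real \<Rightarrow> real \<Rightarrow> ('a \<Rightarrow> 'a \<Rightarrow> relkind)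
     \<Rightarrow> (('a \<Rightarrow> 'a set) \<Rightarrow> 'a \<Rightarrow> real) \<Rightarrow> bool" where
  "DSIC w_f w_e R g \<longleftrightarrow> (\<forall>i m m'. weak_pref w_f w_e R i (g m) (g (m(i := m'))))"

definition efficient :: "(('a \<Rightarrow> 'a set) \<Rightarrow> 'a \<Rightarrow> real) \<Rightarrow> bool" where
  "efficient g \<longleftrightarrow> (\<forall>N. N \<noteq> {} \<longrightarrow> (\<Sum>i\<in>N. g (\<lambda>_. N) i) = 1)"

definition g3_other :: "('a \<Rightarrow> 'a \<Rightarrow> relkind) \<Rightarrow> 'a \<Rightarrow> ('a \<Rightarrow> 'a set) \<Rightarrow> 'a \<Rightarrow> real" where
  "g3_other R k m i =
     (if i \<in> posF R (Fr R k) m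
      then 1 / real (card (posF R (Fr R i \<inter> Fr R k) m - {k}))
      else 0)"

definition g3 :: "('a::finite \<Rightarrow> 'a \<Rightarrow> relkind) \<Rightarrow> 'a \<Rightarrow> ('a \<Rightarrow> 'a set) \<Rightarrow> 'a \<Rightarrow> real" where
  "g3 R k m i =
     (if i = k then 1 - (\<Sum>j\<in>UNIV - {k}. g3_other R k m j) else g3_other R k m i)"

definition intersection_condition :: "('a \<Rightarrow> 'a \<Rightarrow> relkind) \<Rightarrow> 'a \<Rightarrow> bool" where
  "intersection_condition R k \<longleftrightarrow>
     (\<forall>i j. i \<noteq> k \<longrightarrow> j \<noteq> k \<longrightarrow> Fr R i \<inter> Fr R j \<inter> Fr R k \<noteq> {})"

end

theory Submission
  imports Defs
begin

text \<open>
  Agent \<open>i \<noteq> k\<close> is only paid if all its friends among \<open>F\<^sub>k\<close> vote for it, and every agent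
  \<open>j\<close> with that property lies in the set \<open>posF(m\<^bsub>F\<^sub>i \<inter> F\<^sub>k\<^esub>) - {k}\<close>; so each
  paid agent receives at most \<open>1/|posF(m\<^bsub>F\<^sub>k\<^esub>) - {k}|\<close> and the payments to \<open>V - {k}\<close> sum
  to at most one, the rest going to \<open>k\<close>. An agent's message only enters the shares of its
  friends, and since the total is always exactly one, a deviation changes neither its own
  share nor the total share of its enemies nor that of its friends. Under the intersection
  condition every agent has a friend in \<open>F\<^sub>k\<close>, so at a truthful profile exactly the needy
  agents other than \<open>k\<close> are paid, each \<open>1/|N - {k}|\<close>.
\<close>

lemma Fr_sym: "network R \<Longrightarrow> j \<in> Fr R i \<longleftrightarrow> i \<in> Fr R j"
  unfolding network_def Fr_def by auto

lemma g3_other_cong: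
  assumes "\<forall>l \<in> Fr R j \<inter> Fr R k. m l = m' l"
  shows "g3_other R k m j = g3_other R k m' j"
proof -
  have "posF R (Fr R j \<inter> Fr R k) m = posF R (Fr R j \<inter> Fr R k) m'"
    using assms by (auto simp: posF_def)
  moreover have "j \<in> posF R (Fr R k) m \<longleftrightarrow> j \<in> posF R (Fr R k) m'"
    using assms by (auto simp: posF_def)
  ultimately show ?thesis unfolding g3_other_def by simp
qed

lemma g3_other_nonneg: "0 \<le> g3_other R k m i"
  unfolding g3_other_def by simp

lemma g3_other_le_one: "g3_other R k m i \<le> 1"
  unfolding g3_other_def by (cases "card (posF R (Fr R i \<inter> Fr R k) m - {k})") auto

lemma sum_g3_other_le_one:
  fixes R :: "'a::finite \<Rightarrow> 'a \<Rightarrow> relkind"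
  shows "(\<Sum>j\<in>UNIV - {k}. g3_other R k m j) \<le> 1"
proof -
  define S where "S = posF R (Fr R k) m - {k}"
  have "(\<Sum>j\<in>UNIV - {k}. g3_other R k m j) = (\<Sum>j\<in>S. g3_other R k m j)"
    by (rule sum.mono_neutral_right) (auto simp: S_def g3_other_def)
  also have "\<dots> \<le> (\<Sum>j\<in>S. 1 / real (card S))"
  proof (rule sum_mono)
    fix j assume j: "j \<in> S"
    have "S \<subseteq> posF R (Fr R j \<inter> Fr R k) m - {k}"
      by (auto simp: S_def posF_def)
    then have "card S \<le> card (posF R (Fr R j \<inter> Fr R k) m - {k})"
      by (rule card_mono[rotated]) simp
    moreover have "card S > 0"
      using j by (auto simp: card_gt_0_iff)
    ultimately show "g3_other R k m j \<le> 1 / real (card S)"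
      using j by (auto simp: g3_other_def S_def divide_simps)
  qed
  also have "\<dots> \<le> 1"
    by (cases "card S = 0") auto
  finally show ?thesis .
qed

lemma sum_g3_eq_one:
  fixes R :: "'a::finite \<Rightarrow> 'a \<Rightarrow> relkind"
  shows "(\<Sum>i\<in>UNIV. g3 R k m i) = 1"
proof -
  have "(\<Sum>i\<in>UNIV. g3 R k m i) = g3 R k m k + (\<Sum>i\<in>UNIV - {k}. g3 R k m i)"
    by (rule sum.remove) auto
  also have "(\<Sum>i\<in>UNIV - {k}. g3 R k m i) = (\<Sum>i\<in>UNIV - {k}. g3_other R k m i)"
    by (rule sum.cong) (auto simp: g3_def)
  finally show ?thesis by (simp add: g3_def)
qed

lemma is_mechanism_g3:
  fixes R :: "'a::finite \<Rightarrow> 'a \<Rightarrow> relkind"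
  shows "is_mechanism (g3 R k)"
  unfolding is_mechanism_def
proof (intro allI)
  fix m i
  have "0 \<le> (\<Sum>j\<in>UNIV - {k}. g3_other R k m j)"
    by (rule sum_nonneg) (simp add: g3_other_nonneg)
  then show "0 \<le> g3 R k m i \<and> g3 R k m i \<le> 1"
    using sum_g3_other_le_one[of R k m] g3_other_nonneg[of R k m i] g3_other_le_one[of R k m i]
    by (auto simp: g3_def)
qed

lemma valid_g3: "valid (g3 R k)"
  unfolding valid_def by (simp add: sum_g3_eq_one)

lemma g3_update_non_friend:
  assumes "network R" and "j \<notin> Fr R i"
  shows "g3 R k (m(i := m')) j = g3 R k m j"
proof (cases "i \<in> Fr R k")
  case True
  have "i \<notin> Fr R j"
    using Fr_sym[OF assms(1)] assms(2) by simp
  then have "g3_other R k (m(i := m')) j = g3_other R k m j"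
    by (intro g3_other_cong) auto
  moreover have "j \<noteq> k"
    using True Fr_sym[OF assms(1)] assms(2) by auto
  ultimately show ?thesis by (simp add: g3_def)
next
  case False
  then have "g3_other R k (m(i := m')) = g3_other R k m"
    by (intro ext g3_other_cong) auto
  then show ?thesis by (simp add: g3_def)
qed

lemma DSIC_if_budget_balanced_and_friend_local:
  fixes g :: "('a::finite \<Rightarrow> 'a set) \<Rightarrow> 'a \<Rightarrow> real"
  assumes balanced: "\<And>m. (\<Sum>i\<in>UNIV. g m i) = c"
    and local: "\<And>i j m m'. j \<notin> Fr R i \<Longrightarrow> g (m(i := m')) j = g m j"
  shows "DSIC w_f w_e R g"
  unfolding DSIC_def weak_pref_def
proof (intro allI)
  fix i m m'
  let ?d = "\<lambda>j. g (m(i := m')) j - g m j"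
  have outside: "?d j = 0" if "j \<notin> Fr R i" for j
    using local[OF that] by simp
  have "(\<Sum>j\<in>UNIV. ?d j) = 0"
    by (simp add: sum_subtractf balanced)
  also have "(\<Sum>j\<in>UNIV. ?d j) = (\<Sum>j\<in>Fr R i. ?d j) + (\<Sum>j\<in>UNIV - Fr R i. ?d j)"
    by (rule sum.subset_diff[where A = UNIV and B = "Fr R i", simplified add.commute]) auto
  also have "(\<Sum>j\<in>UNIV - Fr R i. ?d j) = 0"
    by (rule sum.neutral) (auto simp: outside)
  finally have friends: "(\<Sum>j\<in>Fr R i. ?d j) = 0" by linarith
  have enemies: "(\<Sum>j\<in>En R i. ?d j) = 0"
    by (rule sum.neutral) (auto simp: outside En_def Fr_def)
  have "?d i = 0"
    by (rule outside) (simp add: Fr_def)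
  then show "\<not> strict_pref w_f w_e R i (g (m(i := m'))) (g m)"
    unfolding strict_pref_def using friends enemies by simp
qed

lemma g3_other_truthful:
  assumes "intersection_condition R k" and "i \<noteq> k"
  shows "g3_other R k (\<lambda>_. N) i = (if i \<in> N then 1 / real (card (N - {k})) else 0)"
proof -
  have "i \<in> posF R (Fr R k) (\<lambda>_. N) \<longleftrightarrow> i \<in> N"
    using assms unfolding intersection_condition_def posF_def by blast
  moreover have "posF R (Fr R i \<inter> Fr R k) (\<lambda>_. N) - {k} = N - {k}"
    using assms unfolding intersection_condition_def posF_def by blast
  ultimately show ?thesis unfolding g3_other_def by simp
qed

lemma efficient_g3:
  fixes R :: "'a::finite \<Rightarrow> 'a \<Rightarrow> relkind"
  assumes ic: "intersection_condition R k"
  shows "efficient (g3 R k)"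
  unfolding efficient_def
proof (intro allI impI)
  fix N :: "'a set"
  assume "N \<noteq> {}"
  let ?p = "g3 R k (\<lambda>_. N)"
  note val = g3_other_truthful[OF ic]
  show "(\<Sum>i\<in>N. ?p i) = 1"
  proof (cases "N - {k} = {}")
    case True
    then have N: "N = {k}"
      using \<open>N \<noteq> {}\<close> by auto
    have "(\<Sum>j\<in>UNIV - {k}. g3_other R k (\<lambda>_. N) j) = 0"
      by (rule sum.neutral) (auto simp: val N)
    then show ?thesis by (simp add: N g3_def)
  next
    case False
    have share_sum: "(\<Sum>j\<in>N - {k}. 1 / real (card (N - {k}))) = 1"
      using False by simp
    have "(\<Sum>j\<in>UNIV - {k}. g3_other R k (\<lambda>_. N) j) = (\<Sum>j\<in>N - {k}. g3_other R k (\<lambda>_. N) j)"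
      by (rule sum.mono_neutral_right) (auto simp: val)
    also have "\<dots> = 1"
      using share_sum by (simp add: val)
    finally have "?p k = 0" by (simp add: g3_def)
    then have "(\<Sum>i\<in>N. ?p i) = (\<Sum>i\<in>N - {k}. ?p i)"
      by (intro sum.mono_neutral_right) auto
    also have "\<dots> = 1"
      using share_sum by (simp add: val g3_def)
    finally show ?thesis .
  qed
qed

theorem theorem3:
  fixes R :: "'a::finite \<Rightarrow> 'a \<Rightarrow> relkind" and w_f w_e :: real and k :: 'a
  assumes "network R" and "w_f > 0" and "w_e > 0"
  shows "is_mechanism (g3 R k) \<and> valid (g3 R k) \<and> DSIC w_f w_e R (g3 R k)
         \<and> (intersection_condition R k \<longrightarrow> efficient (g3 R k))"
proof -
  have "DSIC w_f w_e R (g3 R k)"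
    using sum_g3_eq_one g3_update_non_friend[OF assms(1)]
    by (rule DSIC_if_budget_balanced_and_friend_local)
  then show ?thesis
    using is_mechanism_g3 valid_g3 efficient_g3 by blast
qed

end
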